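(* Consider the inner product on the parabola $y=x^2$ $$\langle f,g\rangle=\int_{\mathbb R}f(x,x^2)\,g(x,x^2)\,e^{-x^2}\,dx .$$ For $n\ge1$, the polynomials $$Y_{n,1}(x,y)=L_n^{-\frac12}(y),\qquad Y_{n,2}(x,y)=x\,L_{n-1}^{\frac12}(y)$$ form an orthogonal basis of $\mathcal H_n$, where $L_n^{\alpha}$ are the Laguerre polynomials. Moreover, both $u=Y_{n,1}$ and $u=Y_{n,2}$ satisfy $$x\,\partial_x\partial_y u+y\,\partial_y^2u+\big(\tfrac12-y\big)\partial_yu-x\,\partial_xu=-n\,u .$$
   Context: $L_n^{\alpha}$ denotes the Laguerre polynomial of degree $n$, orthogonal with respect to $t^{\alpha}e^{-t}$ on $[0,\infty)$. $\mathcal H_n$ denotes the space of polynomials $P$ of degree $n$ in two variables with $\langle P,Q\rangle=0$ for all polynomials $Q$ of degree $<n$ and $\langle P,P\rangle>0$, considered modulo the ideal $\langle y-x^2\rangle$; it has dimension 2 for $n\ge 1$. *)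

theory Defs
  imports "HOL-Analysis.Analysis" "HOL-Computational_Algebra.Polynomial"
begin

text \<open>Bivariate real polynomials P(x,y) are represented as polynomials in y whose
coefficients are polynomials in x: type real poly poly.\<close>

type_synonym bipoly = "real poly poly"

definition beval :: "bipoly \<Rightarrow> real \<Rightarrow> real \<Rightarrow> real" where
  "beval P x y = poly (map_poly (\<lambda>c. poly c x) P) y"

definition total_degree :: "bipoly \<Rightarrow> nat" where
  "total_degree P = (if P = 0 then 0
     else Max {degree (coeff P j) + j | j. j \<le> degree P \<and> coeff P j \<noteq> 0})"

definition dx :: "bipoly \<Rightarrow> bipoly" where "dx P = map_poly pderiv P"
definition dy :: "bipoly \<Rightarrow> bipoly" where "dy P = pderiv P"
definition mul_x :: "bipoly \<Rightarrow> bipoly" where "mul_x P = smult [:0, 1:] P"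
definition mul_y :: "bipoly \<Rightarrow> bipoly" where "mul_y P = pCons 0 P"
definition const_bp :: "real \<Rightarrow> bipoly" where "const_bp a = [:[:a:]:]"

text \<open>The generator y - x^2 of the ideal.\<close>
definition parab :: bipoly where "parab = [: -[:0, 0, 1:], 1 :]"

definition ip :: "bipoly \<Rightarrow> bipoly \<Rightarrow> real" where
  "ip P Q = (LINT x|lborel. beval P x (x^2) * beval Q x (x^2) * exp (-(x^2)))"

text \<open>Elements of H_n (before passing to the quotient).\<close>
definition in_H :: "nat \<Rightarrow> bipoly \<Rightarrow> bool" where
  "in_H n P \<longleftrightarrow> total_degree P = n \<and> (\<forall>Q. total_degree Q < n \<longrightarrow> ip P Q = 0) \<and> ip P P > 0"

definition laguerre :: "real \<Rightarrow> nat \<Rightarrow> real poly" where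
  "laguerre \<alpha> n = (\<Sum>k\<le>n. monom ((-1)^k * ((real n + \<alpha>) gchoose (n - k)) / fact k) k)"

definition in_y :: "real poly \<Rightarrow> bipoly" where "in_y p = map_poly (\<lambda>c. [:c:]) p"

definition Y1 :: "nat \<Rightarrow> bipoly" where "Y1 n = in_y (laguerre (-1/2) n)"
definition Y2 :: "nat \<Rightarrow> bipoly" where "Y2 n = mul_x (in_y (laguerre (1/2) (n - 1)))"

definition Dop :: "bipoly \<Rightarrow> bipoly" where
  "Dop u = mul_x (dx (dy u)) + mul_y (dy (dy u)) + smult [:1/2:] (dy u) - mul_y (dy u)
           - mul_x (dx u)"

end

theory Submission
  imports Defs "HOL-Probability.Distributions"
begin

text \<open>Restricting to the parabola, \<open>P \<mapsto> P(x, x\<^sup>2)\<close>, turns the inner product into the Hermite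
  inner product \<open>\<integral> p q exp(-x\<^sup>2)\<close>, maps total degree \<open>\<le> n\<close> to degree \<open>\<le> 2n\<close>, and has
  kernel the ideal of \<open>y - x\<^sup>2\<close>. Differentiating along the parabola shows that four times the
  operator of the statement becomes Hermite's operator \<open>f'' - 2 x f'\<close> on polynomials in \<open>y\<close>
  (and that operator minus 2 on \<open>x\<close> times such polynomials). So Laguerre's equation for
  L_n^(-1/2) and L_(n-1)^(1/2) yields both the eigenvalue equations and the fact that the
  restrictions of \<open>Y1 n\<close> and \<open>Y2 n\<close> solve Hermite's equation of index \<open>2n\<close> and \<open>2n - 1\<close>.
  Such solutions are orthogonal to all polynomials of lower degree (integration by parts).
  Conversely an element of H_n restricts to a polynomial of degree \<open>\<le> 2n\<close> orthogonal to
  degrees \<open>\<le> 2n - 2\<close>; removing its two top coefficients with the restrictions of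
  \<open>Y1 n\<close> and \<open>Y2 n\<close> leaves a polynomial orthogonal to itself, hence zero.\<close>

section \<open>Gaussian integrals of polynomials\<close>

definition gauss_moment :: "nat \<Rightarrow> real" where
  "gauss_moment k = (if even k then sqrt pi * fact k / (2 ^ k * fact (k div 2)) else 0)"

lemma has_bochner_integral_gauss_moment:
  "has_bochner_integral lborel (\<lambda>x::real. exp (- x\<^sup>2) * x ^ k) (gauss_moment k)"
proof (cases "even k")
  case True
  then obtain j where k: "k = 2 * j" by blast
  have "has_bochner_integral lborel (\<lambda>x::real. exp (- x\<^sup>2) * x ^ (2 * j))
      (2 *\<^sub>R ((sqrt pi / 2) * (fact (2 * j) / (2 ^ (2 * j) * fact j))))"
    by (rule has_bochner_integral_even_function[OF gaussian_moment_even_pos]) simp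
  then show ?thesis using k by (simp add: gauss_moment_def)
next
  case False
  then obtain j where k: "k = 2 * j + 1" using oddE by blast
  have "has_bochner_integral lborel (\<lambda>x::real. exp (- x\<^sup>2) * x ^ (2 * j + 1)) 0"
    by (rule has_bochner_integral_odd_function[OF gaussian_moment_odd_pos]) simp
  then show ?thesis using k by (simp add: gauss_moment_def)
qed

lemma gauss_moment_Suc_Suc: "2 * gauss_moment (Suc (Suc k)) = real (Suc k) * gauss_moment k"
proof (cases "even k")
  case True
  then obtain j where k: "k = 2 * j" by blast
  have cancel: "2 * (s * (2 * a * b * f) / (4 * p * (a * g))) = b * (s * f / (p * g))"
    if "a \<noteq> 0" for a b s f p g :: real
    using that by (simp add: field_simps)
  have "fact (Suc (Suc k)) = 2 * (real j + 1) * real (Suc k) * fact k"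
    using k by (simp add: algebra_simps)
  moreover have "fact (Suc (Suc k) div 2) = (real j + 1) * fact j"
    using k by simp
  moreover have "(2::real) ^ Suc (Suc k) = 4 * 2 ^ k"
    by simp
  ultimately have "2 * gauss_moment (Suc (Suc k))
      = 2 * (sqrt pi * (2 * (real j + 1) * real (Suc k) * fact k) / (4 * 2 ^ k * ((real j + 1) * fact j)))"
    using True by (simp only: gauss_moment_def even_Suc_Suc_iff if_True)
  also have "\<dots> = real (Suc k) * (sqrt pi * fact k / (2 ^ k * fact j))"
    by (rule cancel) simp
  finally show ?thesis
    using True k by (simp add: gauss_moment_def)
qed (simp add: gauss_moment_def)

definition gauss_integral :: "real poly \<Rightarrow> real" where
  "gauss_integral p = (LINT x|lborel. poly p x * exp (- x\<^sup>2))"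

lemma has_bochner_integral_gauss_integral:
  "has_bochner_integral lborel (\<lambda>x. poly p x * exp (- x\<^sup>2)) (\<Sum>i\<le>degree p. coeff p i * gauss_moment i)"
proof -
  have "has_bochner_integral lborel (\<lambda>x. \<Sum>i\<le>degree p. coeff p i * (exp (- x\<^sup>2) * x ^ i))
      (\<Sum>i\<le>degree p. coeff p i * gauss_moment i)"
    by (intro has_bochner_integral_sum has_bochner_integral_mult_right has_bochner_integral_gauss_moment)
  then show ?thesis
    by (simp add: poly_altdef sum_distrib_left mult_ac)
qed

lemma integrable_gauss_integral: "integrable lborel (\<lambda>x. poly p x * exp (- x\<^sup>2))"
  for p :: "real poly"
  using has_bochner_integral_gauss_integral by (rule integrable.intros)

lemma gauss_integral_0 [simp]: "gauss_integral 0 = 0"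
  by (simp add: gauss_integral_def)

lemma gauss_integral_add: "gauss_integral (p + q) = gauss_integral p + gauss_integral q"
  unfolding gauss_integral_def by (simp add: distrib_right integrable_gauss_integral)

lemma gauss_integral_diff: "gauss_integral (p - q) = gauss_integral p - gauss_integral q"
  unfolding gauss_integral_def by (simp add: left_diff_distrib integrable_gauss_integral)

lemma gauss_integral_smult: "gauss_integral (smult c p) = c * gauss_integral p"
  unfolding gauss_integral_def by (simp add: mult.assoc)

lemma gauss_integral_sum: "gauss_integral (sum f A) = (\<Sum>a\<in>A. gauss_integral (f a))"
  by (induction A rule: infinite_finite_induct) (simp_all add: gauss_integral_add)

lemma gauss_integral_monom: "gauss_integral (monom c k) = c * gauss_moment k"
proof -
  have "has_bochner_integral lborel (\<lambda>x. poly (monom c k) x * exp (- x\<^sup>2)) (c * gauss_moment k)"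
    using has_bochner_integral_mult_right[OF has_bochner_integral_gauss_moment]
    by (simp add: poly_monom mult_ac)
  then show ?thesis
    unfolding gauss_integral_def by (rule has_bochner_integral_integral_eq)
qed

lemma pderiv_sum: "pderiv (sum f A) = (\<Sum>a\<in>A. pderiv (f a))"
  by (induction A rule: infinite_finite_induct) (auto simp: pderiv_add)

text \<open>The integrand is the derivative of \<open>p(x) exp(-x\<^sup>2)\<close>; on monomials this is the moment recursion.\<close>
lemma gauss_integral_by_parts: "gauss_integral (pderiv p - [:0, 2:] * p) = 0"
proof -
  have monom: "gauss_integral (pderiv (monom c i) - [:0, 2:] * monom c i) = 0" for c i
  proof -
    have "gauss_integral (pderiv (monom c i)) = 2 * c * gauss_moment (Suc i)"
      using gauss_moment_Suc_Suc[of "i - 1"] monom_0[of 0]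
      by (cases i) (simp_all add: pderiv_monom gauss_integral_monom gauss_moment_def)
    moreover have "[:0, 2:] * monom c i = monom (2 * c) (Suc i)"
      by (simp add: monom_Suc smult_monom)
    ultimately show ?thesis
      by (simp add: gauss_integral_diff gauss_integral_monom)
  qed
  have sum: "pderiv p - [:0, 2:] * p = (\<Sum>i\<le>degree p. pderiv (monom (coeff p i) i) - [:0, 2:] * monom (coeff p i) i)"
    by (subst (1 2) poly_as_sum_of_monoms[symmetric])
       (simp add: pderiv_sum sum_subtractf sum_distrib_left)
  show ?thesis
    unfolding sum gauss_integral_sum monom by simp
qed

lemma gauss_integral_square_pos:
  assumes "q \<noteq> 0"
  shows "gauss_integral (q * q) > 0"
proof -
  let ?f = "\<lambda>x. poly (q * q) x * exp (- x\<^sup>2)"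
  have nonneg: "\<And>x. 0 \<le> ?f x" by simp
  then have "gauss_integral (q * q) \<ge> 0"
    unfolding gauss_integral_def by (simp add: integral_nonneg_AE)
  moreover have "gauss_integral (q * q) \<noteq> 0"
  proof
    assume "gauss_integral (q * q) = 0"
    then have "AE x in lborel. ?f x = 0"
      unfolding gauss_integral_def
      using integral_nonneg_eq_0_iff_AE[OF integrable_gauss_integral] nonneg by blast
    then have "AE x in lborel. x \<in> {x. poly q x = 0}"
      by eventually_elim simp
    moreover have "AE x in lborel. \<forall>s \<in> {x. poly q x = 0}. x \<noteq> s"
      using poly_roots_finite[OF assms] by (rule AE_finite_allI) (rule AE_lborel_singleton)
    ultimately have "AE x::real in lborel. False"
      by eventually_elim blast
    then show False
      by (simp add: eventually_False ae_filter_eq_bot_iff)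
  qed
  ultimately show ?thesis by simp
qed

lemma gauss_integral_orthogonal_monoms_eq_0:
  assumes "degree r \<le> d" and "\<And>j. j \<le> d \<Longrightarrow> gauss_integral (r * monom 1 j) = 0"
  shows "r = 0"
proof -
  have "gauss_integral (r * monom (coeff r j) j) = 0" if "j \<le> degree r" for j
  proof -
    have "r * monom (coeff r j) j = smult (coeff r j) (r * monom 1 j)"
      by (metis mult.right_neutral mult_smult_right smult_monom)
    then show ?thesis
      using that assms by (simp add: gauss_integral_smult)
  qed
  moreover have "r * r = (\<Sum>j\<le>degree r. r * monom (coeff r j) j)"
    by (subst (2) poly_as_sum_of_monoms[symmetric]) (simp add: sum_distrib_left)
  ultimately have "gauss_integral (r * r) = 0"
    by (simp add: gauss_integral_sum)
  then show ?thesis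
    using gauss_integral_square_pos by fastforce
qed

section \<open>Hermite's equation\<close>

definition hermite_ode :: "nat \<Rightarrow> real poly \<Rightarrow> bool" where
  "hermite_ode m f \<longleftrightarrow> pderiv (pderiv f) - [:0, 2:] * pderiv f = - smult (2 * real m) f"

lemma hermite_ode_pderiv:
  assumes "hermite_ode (Suc m) f"
  shows "hermite_ode m (pderiv f)"
proof -
  have "pderiv ([:0, 2:] * g) = [:0, 2:] * pderiv g + smult 2 g" for g :: "real poly"
    by (simp add: pderiv_mult pderiv_pCons pderiv_smult)
  then have "pderiv (pderiv (pderiv f)) - [:0, 2:] * pderiv (pderiv f) - smult 2 (pderiv f)
      = - smult (2 * real (Suc m)) (pderiv f)"
    using arg_cong[OF assms[unfolded hermite_ode_def], of pderiv]
    by (simp add: pderiv_diff pderiv_smult pderiv_minus)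
  then show ?thesis
    by (simp add: hermite_ode_def algebra_simps smult_add_left)
qed

text \<open>Integrating \<open>(f' p exp(-x\<^sup>2))'\<close> and using the equation gives
  \<open>\<integral> f' p' exp(-x\<^sup>2) = 2m \<integral> f p exp(-x\<^sup>2)\<close>; and \<open>f'\<close> solves the equation of index \<open>m - 1\<close>.\<close>
lemma gauss_integral_hermite_ode_orthogonal:
  assumes "hermite_ode m f" and "degree p < m"
  shows "gauss_integral (f * p) = 0"
  using assms
proof (induction m arbitrary: f p)
  case (Suc m)
  have "pderiv (pderiv f * p) - [:0, 2:] * (pderiv f * p)
      = pderiv f * pderiv p + p * (pderiv (pderiv f) - [:0, 2:] * pderiv f)"
    by (simp add: pderiv_mult algebra_simps)
  also have "\<dots> = pderiv f * pderiv p - smult (2 * real (Suc m)) (f * p)"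
    unfolding Suc.prems(1)[unfolded hermite_ode_def] by (simp add: algebra_simps)
  finally have "gauss_integral (pderiv f * pderiv p) = 2 * real (Suc m) * gauss_integral (f * p)"
    using gauss_integral_by_parts[of "pderiv f * p"]
    by (simp add: gauss_integral_diff gauss_integral_smult)
  moreover have "gauss_integral (pderiv f * pderiv p) = 0"
  proof (cases "degree p = 0")
    case True
    then have "pderiv p = 0" by (simp add: pderiv_eq_0_iff)
    then show ?thesis by simp
  next
    case False
    then show ?thesis
      using Suc.prems(2) by (intro Suc.IH hermite_ode_pderiv Suc.prems(1)) (simp add: degree_pderiv)
  qed
  ultimately show ?case by simp
qed simp

lemma smult_add_smult_eq_0_of_degree_less:
  fixes p q :: "'a::idom poly"
  assumes "degree q < degree p" and "q \<noteq> 0" and "smult a p + smult b q = 0"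
  shows "a = 0 \<and> b = 0"
proof -
  have "a * lead_coeff p = 0"
    using arg_cong[OF assms(3), of "\<lambda>r. coeff r (degree p)"] assms(1) by (simp add: coeff_eq_0)
  moreover have "p \<noteq> 0"
    using assms(1) by auto
  ultimately have "a = 0"
    by simp
  with assms(2,3) show ?thesis
    by simp
qed

lemma exists_degree_diff_smult_less:
  fixes q h :: "'a::field poly"
  assumes "degree q \<le> degree h" and "0 < degree h"
  shows "\<exists>c. degree (q - smult c h) < degree h"
proof
  let ?c = "coeff q (degree h) / lead_coeff h"
  have "h \<noteq> 0"
    using assms(2) by auto
  have "degree (q - smult ?c h) \<le> degree h - 1"
  proof (rule degree_le, intro allI impI)
    fix i assume "degree h - 1 < i"
    then consider "i = degree h" | "degree h < i"
      by linarith
    then show "coeff (q - smult ?c h) i = 0"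
      by cases (use \<open>h \<noteq> 0\<close> assms(1) in \<open>auto simp: coeff_eq_0\<close>)
  qed
  then show "degree (q - smult ?c h) < degree h"
    using assms(2) by linarith
qed

lemma hermite_ode_span:
  assumes f: "hermite_ode (Suc m) f" "degree f = Suc m" and g: "hermite_ode m g" "degree g = m"
    and "0 < m" and q: "degree q \<le> Suc m" "\<And>j. j < m \<Longrightarrow> gauss_integral (q * monom 1 j) = 0"
  shows "\<exists>a b. q = smult a f + smult b g"
proof -
  obtain a where a: "degree (q - smult a f) < Suc m"
    using exists_degree_diff_smult_less[of q f] f q by auto
  obtain b where b: "degree (q - smult a f - smult b g) < m"
    using exists_degree_diff_smult_less[of "q - smult a f" g] a g \<open>0 < m\<close> by auto
  have "q - smult a f - smult b g = 0"
  proof (rule gauss_integral_orthogonal_monoms_eq_0)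
    show "degree (q - smult a f - smult b g) \<le> m - 1"
      using b by linarith
    fix j assume "j \<le> m - 1"
    then have "j < m"
      using \<open>0 < m\<close> by linarith
    then have "gauss_integral (f * monom 1 j) = 0" and "gauss_integral (g * monom 1 j) = 0"
      using f(1) g(1) by (auto intro!: gauss_integral_hermite_ode_orthogonal simp: degree_monom_eq)
    with q(2)[OF \<open>j < m\<close>] show "gauss_integral ((q - smult a f - smult b g) * monom 1 j) = 0"
      by (simp add: algebra_simps gauss_integral_add gauss_integral_diff gauss_integral_smult)
  qed
  then show ?thesis
    unfolding diff_diff_eq eq_iff_diff_eq_0[symmetric] by blast
qed

section \<open>Laguerre polynomials\<close>

lemma coeff_laguerre:
  "coeff (laguerre a n) k = (if k \<le> n then (-1) ^ k * ((real n + a) gchoose (n - k)) / fact k else 0)"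
  by (simp add: laguerre_def coeff_sum)

lemma degree_laguerre: "degree (laguerre a n) = n"
  by (rule antisym) (auto intro: degree_le le_degree simp: coeff_laguerre)

lemma lead_coeff_laguerre: "lead_coeff (laguerre a n) = (-1) ^ n / fact n"
  by (simp add: degree_laguerre coeff_laguerre)

lemma laguerre_neq_0: "laguerre a n \<noteq> 0"
  using lead_coeff_laguerre[of a n] by auto

lemma coeff_laguerre_Suc:
  "real (Suc k) * (real k + a + 1) * coeff (laguerre a n) (Suc k) = (real k - real n) * coeff (laguerre a n) k"
proof (cases "k < n")
  case True
  define m where "m = n - Suc k"
  define G0 where "G0 = (real n + a) gchoose m"
  define G1 where "G1 = (real n + a) gchoose Suc m"
  have "(real n + a) * G0 = real m * G0 + real (Suc m) * G1"
    unfolding G0_def G1_def by (rule gbinomial_mult_1)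
  moreover have "real m = real n - real k - 1"
    using True by (simp add: m_def)
  ultimately have key: "(real k + a + 1) * G0 = (real n - real k) * G1"
    by (simp add: algebra_simps)
  have c1: "real (Suc k) * coeff (laguerre a n) (Suc k) = - ((-1) ^ k * G0 / fact k)"
    using True by (simp add: coeff_laguerre G0_def m_def)
  have c0: "coeff (laguerre a n) k = (-1) ^ k * G1 / fact k"
    using True by (simp add: coeff_laguerre G1_def m_def Suc_diff_Suc)
  have "real (Suc k) * (real k + a + 1) * coeff (laguerre a n) (Suc k)
      = (real k + a + 1) * (real (Suc k) * coeff (laguerre a n) (Suc k))"
    by (simp only: mult_ac)
  also have "\<dots> = - ((real k + a + 1) * G0) * (-1) ^ k / fact k"
    unfolding c1 by simp
  also have "\<dots> = (real k - real n) * coeff (laguerre a n) k"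
    unfolding key c0 by (simp add: algebra_simps)
  finally show ?thesis .
qed (auto simp: coeff_laguerre)

lemma laguerre_ode:
  fixes a :: real and n :: nat
  defines "L \<equiv> laguerre a n"
  shows "pCons 0 (pderiv (pderiv L)) + smult (a + 1) (pderiv L) - pCons 0 (pderiv L) = - smult (real n) L"
proof (rule poly_eqI)
  fix k
  show "coeff (pCons 0 (pderiv (pderiv L)) + smult (a + 1) (pderiv L) - pCons 0 (pderiv L)) k
      = coeff (- smult (real n) L) k"
    using coeff_laguerre_Suc[of k a n] unfolding L_def
    by (cases k) (simp_all add: coeff_pderiv algebra_simps)
qed

section \<open>Bivariate polynomials and the parabola\<close>

lemma coeff_in_y: "coeff (in_y p) k = [:coeff p k:]"
  by (simp add: in_y_def coeff_map_poly)

lemma degree_in_y: "degree (in_y p) = degree p"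
  unfolding in_y_def by (rule degree_map_poly) simp

lemma in_y_add: "in_y (p + q) = in_y p + in_y q"
  by (simp add: poly_eq_iff coeff_in_y)

lemma in_y_diff: "in_y (p - q) = in_y p - in_y q"
  by (simp add: poly_eq_iff coeff_in_y)

lemma in_y_smult: "in_y (smult c p) = smult [:c:] (in_y p)"
  by (simp add: poly_eq_iff coeff_in_y mult.commute)

lemma in_y_pCons_0: "in_y (pCons 0 p) = mul_y (in_y p)"
  by (simp add: poly_eq_iff coeff_in_y mul_y_def coeff_pCons split: nat.split)

lemma dy_in_y: "dy (in_y p) = in_y (pderiv p)"
  by (simp add: poly_eq_iff coeff_in_y dy_def coeff_pderiv of_nat_poly mult.commute)

lemma dx_in_y: "dx (in_y p) = 0"
  by (simp add: poly_eq_iff coeff_in_y dx_def coeff_map_poly)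

lemma dx_mul_x_in_y: "dx (mul_x (in_y p)) = in_y p"
  by (simp add: poly_eq_iff coeff_in_y dx_def mul_x_def coeff_map_poly pderiv_pCons)

lemma dy_mul_x: "dy (mul_x P) = mul_x (dy P)"
  by (simp add: dy_def mul_x_def pderiv_smult)

lemma dx_dy_commute: "dx (dy P) = dy (dx P)"
  by (simp add: poly_eq_iff dx_def dy_def coeff_map_poly coeff_pderiv pderiv_mult of_nat_poly)

lemma Dop_in_y:
  "Dop (in_y p) = in_y (pCons 0 (pderiv (pderiv p)) + smult (1/2) (pderiv p) - pCons 0 (pderiv p))"
  by (simp add: Dop_def dy_in_y dx_in_y mul_x_def in_y_add in_y_diff in_y_smult in_y_pCons_0)

lemma Dop_mul_x_in_y:
  "Dop (mul_x (in_y p))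
    = mul_x (in_y (pCons 0 (pderiv (pderiv p)) + smult (3/2) (pderiv p) - pCons 0 (pderiv p) - p))"
proof -
  have "mul_y (mul_x P) = mul_x (mul_y P)" for P
    by (simp add: mul_y_def mul_x_def)
  then have "Dop (mul_x (in_y p)) = mul_x (in_y (pderiv p)) + mul_x (mul_y (in_y (pderiv (pderiv p))))
      + smult [:1/2:] (mul_x (in_y (pderiv p))) - mul_x (mul_y (in_y (pderiv p))) - mul_x (in_y p)"
    by (simp add: Dop_def dy_mul_x dy_in_y dx_mul_x_in_y)
  moreover have "in_y (smult (3/2) q) = in_y q + smult [:1/2:] (in_y q)" for q
    by (simp add: poly_eq_iff coeff_in_y)
  ultimately show ?thesis
    by (simp add: in_y_add in_y_diff in_y_pCons_0 mul_x_def smult_add_right smult_diff_right mult.commute)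
qed

lemma Dop_Y1: "Dop (Y1 n) = smult [:- real n:] (Y1 n)"
  using laguerre_ode[of "-1/2" n]
  by (simp add: Y1_def Dop_in_y flip: in_y_smult)

lemma Dop_Y2:
  assumes "n \<ge> 1"
  shows "Dop (Y2 n) = smult [:- real n:] (Y2 n)"
proof -
  let ?L = "laguerre (1/2) (n - 1)"
  have ode: "pCons 0 (pderiv (pderiv ?L)) + smult (3/2) (pderiv ?L) - pCons 0 (pderiv ?L) - ?L
      = smult (- real n) ?L"
    using laguerre_ode[of "1/2" "n - 1"] assms by (simp add: algebra_simps smult_diff_left)
  show ?thesis
    unfolding Y2_def Dop_mul_x_in_y ode in_y_smult by (simp add: mul_x_def mult.commute)
qed

definition on_parab :: "bipoly \<Rightarrow> real poly" where
  "on_parab P = poly P [:0, 0, 1:]"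

lemma beval_parab: "beval P x (x\<^sup>2) = poly (on_parab P) x"
  unfolding beval_def on_parab_def
  by (induction P) (auto simp: map_poly_pCons power2_eq_square)

lemma on_parab_add [simp]: "on_parab (P + Q) = on_parab P + on_parab Q"
  by (simp add: on_parab_def)

lemma on_parab_diff [simp]: "on_parab (P - Q) = on_parab P - on_parab Q"
  by (simp add: on_parab_def)

lemma on_parab_mult [simp]: "on_parab (P * Q) = on_parab P * on_parab Q"
  by (simp add: on_parab_def)

lemma on_parab_smult [simp]: "on_parab (smult [:a:] P) = smult a (on_parab P)"
  by (simp add: on_parab_def)

lemma on_parab_mul_x [simp]: "on_parab (mul_x P) = [:0, 1:] * on_parab P"
  by (simp add: on_parab_def mul_x_def)

lemma on_parab_in_y: "on_parab (in_y p) = pcompose p [:0, 0, 1:]"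
  by (induction p) (simp_all add: on_parab_def in_y_def map_poly_pCons pcompose_pCons)

lemma on_parab_eq_0_iff_parab_dvd: "on_parab P = 0 \<longleftrightarrow> parab dvd P"
  using dvd_iff_poly_eq_0[of "- [:0, 0, 1:]" P] by (simp add: on_parab_def parab_def)

lemma pderiv_poly_poly:
  "pderiv (poly P q) = poly (map_poly pderiv P) q + pderiv q * poly (pderiv P) q"
  by (induction P) (simp_all add: map_poly_pCons pderiv_add pderiv_mult pderiv_pCons algebra_simps)

lemma pderiv_on_parab: "pderiv (on_parab P) = on_parab (dx P) + [:0, 2:] * on_parab (dy P)"
proof -
  have "pderiv [:0, 0, 1 :: real:] = [:0, 2:]"
    by (simp add: pderiv_pCons)
  then show ?thesis
    using pderiv_poly_poly[of P "[:0, 0, 1:]"] by (simp add: on_parab_def dx_def dy_def)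
qed

lemma hermite_operator_on_parab:
  "pderiv (pderiv (on_parab u)) - [:0, 2:] * pderiv (on_parab u)
     = on_parab (smult [:4:] (Dop u) + dx (dx u) + smult [:2:] (mul_x (dx u)))"
proof -
  define X :: "real poly" where "X = [:0, 1:]"
  have X: "[:0, 2:] = 2 * X" "[:0, 0, 1:] = X * X" "pderiv X = 1"
    by (simp_all add: X_def numeral_poly pderiv_pCons)
  have mul_x: "on_parab (mul_x P) = X * on_parab P" and mul_y: "on_parab (mul_y P) = X * X * on_parab P"
    for P by (simp_all add: X_def on_parab_def mul_x_def mul_y_def)
  define A B C D where "A = on_parab (dx u)" and "B = on_parab (dy u)"
    and "C = on_parab (dx (dy u))" and "D = on_parab (dy (dy u))"
  have f': "pderiv (on_parab u) = A + 2 * X * B"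
    by (simp add: pderiv_on_parab A_def B_def X mult.assoc)
  have A': "pderiv A = on_parab (dx (dx u)) + 2 * X * C"
    by (simp add: pderiv_on_parab A_def C_def X dx_dy_commute mult.assoc)
  have B': "pderiv B = C + 2 * X * D"
    by (simp add: pderiv_on_parab B_def C_def D_def X mult.assoc)
  have Dop: "on_parab (Dop u) = X * C + X * X * D + smult (1/2) B - X * X * B - X * A"
    unfolding Dop_def on_parab_add on_parab_diff on_parab_smult mul_x mul_y
    by (simp add: A_def B_def C_def D_def dx_dy_commute)
  show ?thesis
    unfolding on_parab_add on_parab_smult Dop mul_x f' A_def[symmetric]
    by (simp add: A' B' X pderiv_add pderiv_mult smult_add_right smult_diff_right algebra_simps
        flip: numeral_mult_conv_smult)
qed

lemma ip_eq_gauss_integral: "ip P Q = gauss_integral (on_parab P * on_parab Q)"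
  by (simp add: ip_def gauss_integral_def beval_parab)

lemma total_degree_eqI:
  assumes "k \<le> degree P" and "coeff P k \<noteq> 0" and "degree (coeff P k) + k = m"
    and "\<And>i. i \<le> degree P \<Longrightarrow> coeff P i \<noteq> 0 \<Longrightarrow> degree (coeff P i) + i \<le> m"
  shows "total_degree P = m"
proof -
  have "Max {degree (coeff P j) + j | j. j \<le> degree P \<and> coeff P j \<noteq> 0} = m"
    by (rule Max_eqI) (use assms in auto)
  moreover have "P \<noteq> 0"
    using assms(2) by auto
  ultimately show ?thesis
    by (simp add: total_degree_def)
qed

lemma total_degree_in_y: "total_degree (in_y p) = degree p"
proof (cases "p = 0")
  case True
  then show ?thesis by (simp add: total_degree_def in_y_def)
next
  case False
  then have "coeff (in_y p) (degree p) \<noteq> 0"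
    by (simp add: coeff_in_y)
  then show ?thesis
    by (intro total_degree_eqI[where k = "degree p"]) (auto simp: coeff_in_y degree_in_y)
qed

lemma total_degree_mul_x_in_y:
  assumes "p \<noteq> 0"
  shows "total_degree (mul_x (in_y p)) = Suc (degree p)"
proof -
  have coeff: "coeff (mul_x (in_y p)) i = [:0, coeff p i:]" for i
    by (simp add: mul_x_def coeff_in_y)
  have "coeff (mul_x (in_y p)) (degree p) \<noteq> 0"
    using assms by (simp add: coeff)
  moreover have "degree (mul_x (in_y p)) = degree p"
    by (simp add: mul_x_def degree_in_y)
  ultimately show ?thesis
    by (intro total_degree_eqI[where k = "degree p"]) (auto simp: coeff)
qed

lemma degree_on_parab_le: "degree (on_parab Q) \<le> 2 * total_degree Q"
proof (cases "Q = 0")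
  case True
  then show ?thesis by (simp add: on_parab_def)
next
  case False
  let ?S = "{degree (coeff Q j) + j | j. j \<le> degree Q \<and> coeff Q j \<noteq> 0}"
  have "on_parab Q = (\<Sum>j\<le>degree Q. coeff Q j * [:0, 0, 1:] ^ j)"
    by (simp add: on_parab_def poly_altdef)
  also have "degree \<dots> \<le> 2 * total_degree Q"
  proof (rule degree_sum_le)
    fix j assume j: "j \<in> {..degree Q}"
    show "degree (coeff Q j * [:0, 0, 1:] ^ j) \<le> 2 * total_degree Q"
    proof (cases "coeff Q j = 0")
      case False
      then have "degree (coeff Q j) + j \<in> ?S"
        using j by auto
      then have "degree (coeff Q j) + j \<le> total_degree Q"
        using \<open>Q \<noteq> 0\<close> by (simp add: total_degree_def)
      moreover have "degree (coeff Q j * [:0, 0, 1:] ^ j) \<le> degree (coeff Q j) + 2 * j"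
        by (rule order.trans[OF degree_mult_le]) (simp add: order.trans[OF degree_power_le])
      ultimately show ?thesis by linarith
    qed simp
  qed simp
  finally show ?thesis .
qed

text \<open>The monomial \<open>x\<^bsup>j mod 2\<^esup> y\<^bsup>j div 2\<^esup>\<close>, which is \<open>x\<^sup>j\<close> on the parabola.\<close>
definition parab_monom :: "nat \<Rightarrow> bipoly" where
  "parab_monom j = monom (monom 1 (j mod 2)) (j div 2)"

lemma total_degree_parab_monom: "total_degree (parab_monom j) = j mod 2 + j div 2"
  by (rule total_degree_eqI[where k = "j div 2"]) (auto simp: parab_monom_def degree_monom_eq)

lemma on_parab_parab_monom: "on_parab (parab_monom j) = monom 1 j"
proof -
  have "on_parab (parab_monom j) = monom 1 (j mod 2) * ([:0, 1:] ^ 2) ^ (j div 2)"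
    by (simp add: on_parab_def parab_monom_def poly_monom power2_eq_square)
  also have "\<dots> = [:0, 1:] ^ (j mod 2 + 2 * (j div 2))"
    by (simp only: monom_altdef smult_1_left power_mult power_add)
  finally show ?thesis
    by (simp add: monom_altdef)
qed

lemma on_parab_Y1: "on_parab (Y1 n) = pcompose (laguerre (-1/2) n) [:0, 0, 1:]"
  by (simp add: Y1_def on_parab_in_y)

lemma on_parab_Y2: "on_parab (Y2 n) = [:0, 1:] * pcompose (laguerre (1/2) (n - 1)) [:0, 0, 1:]"
  by (simp add: Y2_def on_parab_in_y)

lemma degree_on_parab_Y1: "degree (on_parab (Y1 n)) = 2 * n"
  by (simp add: on_parab_Y1 degree_pcompose degree_laguerre)

lemma degree_on_parab_Y2:
  assumes "n \<ge> 1"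
  shows "degree (on_parab (Y2 n)) = 2 * n - 1"
proof -
  have "pcompose (laguerre (1/2) (n - 1)) [:0, 0, 1:] \<noteq> 0"
    by (simp add: pcompose_eq_0_iff laguerre_neq_0)
  then show ?thesis
    using assms by (simp add: on_parab_Y2 degree_mult_eq degree_pcompose degree_laguerre)
qed

lemma hermite_ode_Y1: "hermite_ode (2 * n) (on_parab (Y1 n))"
proof -
  have "dx (Y1 n) = 0"
    by (simp add: Y1_def dx_in_y)
  then show ?thesis
    unfolding hermite_ode_def hermite_operator_on_parab Dop_Y1 by (simp add: dx_def mul_x_def on_parab_def mult.commute)
qed

lemma hermite_ode_Y2:
  assumes "n \<ge> 1"
  shows "hermite_ode (2 * n - 1) (on_parab (Y2 n))"
proof -
  have "dx (Y2 n) = in_y (laguerre (1/2) (n - 1))"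
    by (simp add: Y2_def dx_mul_x_in_y)
  then have "dx (dx (Y2 n)) = 0" and "mul_x (dx (Y2 n)) = Y2 n"
    by (simp_all add: dx_in_y Y2_def)
  then show ?thesis
    unfolding hermite_ode_def hermite_operator_on_parab Dop_Y2[OF assms]
    using assms by (simp add: mult.commute flip: smult_add_left smult_minus_left)
qed

section \<open>The space H_n\<close>

lemma in_H_if_hermite_ode:
  assumes "total_degree P = n" and "hermite_ode m (on_parab P)" and "2 * n \<le> Suc m"
    and "on_parab P \<noteq> 0"
  shows "in_H n P"
proof -
  have "ip P Q = 0" if "total_degree Q < n" for Q
  proof -
    have "degree (on_parab Q) < m"
      using degree_on_parab_le[of Q] that assms(3) by linarith
    then show ?thesis
      using assms(2) by (simp add: ip_eq_gauss_integral gauss_integral_hermite_ode_orthogonal)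
  qed
  then show ?thesis
    using assms(1,4) by (simp add: in_H_def ip_eq_gauss_integral gauss_integral_square_pos)
qed

lemma in_H_orthogonal_monom:
  assumes "in_H n P" and "j < 2 * n - 1"
  shows "gauss_integral (on_parab P * monom 1 j) = 0"
proof -
  have "total_degree (parab_monom j) < n"
    using assms(2) unfolding total_degree_parab_monom by presburger
  then have "ip P (parab_monom j) = 0"
    using assms(1) by (simp add: in_H_def)
  then show ?thesis
    by (simp add: ip_eq_gauss_integral on_parab_parab_monom)
qed

lemma in_H_eq_mod_parab_span_Y:
  assumes "n \<ge> 1" and "in_H n P"
  shows "\<exists>a b R. P - (smult [:a:] (Y1 n) + smult [:b:] (Y2 n)) = parab * R"
proof -
  have "degree (on_parab P) \<le> Suc (2 * n - 1)"
    using degree_on_parab_le[of P] assms by (simp add: in_H_def)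
  then obtain a b where "on_parab P = smult a (on_parab (Y1 n)) + smult b (on_parab (Y2 n))"
    using hermite_ode_span[of "2 * n - 1" "on_parab (Y1 n)" "on_parab (Y2 n)" "on_parab P"]
      hermite_ode_Y1[of n] hermite_ode_Y2 degree_on_parab_Y1[of n] degree_on_parab_Y2
      in_H_orthogonal_monom[OF assms(2)] assms(1)
    by auto
  then have "on_parab (P - (smult [:a:] (Y1 n) + smult [:b:] (Y2 n))) = 0"
    by simp
  then show ?thesis
    unfolding on_parab_eq_0_iff_parab_dvd dvd_def by blast
qed

theorem proposition4p2:
  fixes n :: nat
  assumes "n \<ge> 1"
  shows "in_H n (Y1 n) \<and> in_H n (Y2 n) \<and> ip (Y1 n) (Y2 n) = 0
     \<and> (\<forall>a b. (\<exists>R. smult [:a:] (Y1 n) + smult [:b:] (Y2 n) = parab * R) \<longrightarrow> a = 0 \<and> b = 0)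
     \<and> (\<forall>P. in_H n P \<longrightarrow>
          (\<exists>a b R. P - (smult [:a:] (Y1 n) + smult [:b:] (Y2 n)) = parab * R))
     \<and> Dop (Y1 n) = smult [:- real n:] (Y1 n)
     \<and> Dop (Y2 n) = smult [:- real n:] (Y2 n)"
proof -
  have deg1: "degree (on_parab (Y1 n)) = 2 * n" and deg2: "degree (on_parab (Y2 n)) = 2 * n - 1"
    using degree_on_parab_Y1 degree_on_parab_Y2[OF assms] .
  then have nonzero: "on_parab (Y1 n) \<noteq> 0" "on_parab (Y2 n) \<noteq> 0"
    using assms by auto
  have "in_H n (Y1 n)"
    by (rule in_H_if_hermite_ode[OF _ hermite_ode_Y1 _ nonzero(1)])
       (simp_all add: Y1_def total_degree_in_y degree_laguerre)
  moreover have "in_H n (Y2 n)"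
    using assms
    by (intro in_H_if_hermite_ode[OF _ hermite_ode_Y2[OF assms] _ nonzero(2)])
       (simp_all add: Y2_def total_degree_mul_x_in_y laguerre_neq_0 degree_laguerre)
  moreover have "ip (Y1 n) (Y2 n) = 0"
    unfolding ip_eq_gauss_integral
    by (rule gauss_integral_hermite_ode_orthogonal[OF hermite_ode_Y1]) (use deg2 assms in linarith)
  moreover have "a = 0 \<and> b = 0" if "smult [:a:] (Y1 n) + smult [:b:] (Y2 n) = parab * R" for a b R
  proof -
    have "on_parab (smult [:a:] (Y1 n) + smult [:b:] (Y2 n)) = 0"
      using that unfolding on_parab_eq_0_iff_parab_dvd by auto
    then show ?thesis
      using deg1 deg2 nonzero assms by (intro smult_add_smult_eq_0_of_degree_less) simp_all
  qed
  ultimately show ?thesis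
    using in_H_eq_mod_parab_span_Y[OF assms] Dop_Y1 Dop_Y2[OF assms] by blast
qed

end
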